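(* Let $\mathbf{x}=x_1x_2\ldots$ be an infinite word over a finite alphabet. The following statements are equivalent: (i) $\mathbf{x}$ is eventually periodic; (ii) $r(n,\mathbf{x})\le 2n$ for all sufficiently large integers $n$; (iii) there exists $M$ such that $r(n,\mathbf{x})-n\le M$ for all $n\ge 1$.
   Context: For integers $i\le j$, $x_i^j$ denotes the factor $x_ix_{i+1}\cdots x_j$ of $\mathbf{x}$. For $n\ge1$, $r(n,\mathbf{x})=\min\{m\ge1:\ x_i^{i+n-1}=x_{m-n+1}^{m}\text{ for some } i \text{ with } 1\le i\le m-n\}$, i.e. the length of the shortest prefix of $\mathbf{x}$ containing two (possibly overlapping) occurrences of some word of length $n$. *)

theory Defs
  imports Main
begin

text \<open>An infinite word x = x_1 x_2 ... is modelled as a function nat => 'a;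
  only positions k >= 1 are meaningful (x 0 is ignored).\<close>

definition eventually_periodic :: "(nat \<Rightarrow> 'a) \<Rightarrow> bool" where
  "eventually_periodic x \<longleftrightarrow> (\<exists>p>0. \<exists>N\<ge>1. \<forall>k\<ge>N. x (k + p) = x k)"

definition r :: "nat \<Rightarrow> (nat \<Rightarrow> 'a) \<Rightarrow> nat" where
  "r n x = (LEAST m. m \<ge> 1 \<and>
     (\<exists>i. 1 \<le> i \<and> i + n \<le> m \<and> (\<forall>k<n. x (i + k) = x (m + 1 - n + k))))"

end

theory Submission
  imports Defs
begin

text \<open>If \<open>r(n) \<le> 2n\<close>, the prefix of length \<open>r(n)\<close> ends in a factor of length \<open>n + p\<close> with period
  \<open>p \<le> n\<close>. By the Fine--Wilf theorem the windows obtained for \<open>n\<close> and \<open>n + 1\<close> overlap enough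
  to have the same least period, so all these windows share one period \<open>\<pi>\<close>; since each one
  starts before the previous one ends with room for \<open>\<pi>\<close>, they glue together to a periodic
  tail. Conversely, for an eventually periodic word a repeat of length \<open>n\<close> is found at
  distance at most \<open>N + p\<close> regardless of \<open>n\<close>.\<close>

definition periodic_on :: "(nat \<Rightarrow> 'a) \<Rightarrow> nat \<Rightarrow> nat \<Rightarrow> nat \<Rightarrow> bool" where
  "periodic_on x a b p \<longleftrightarrow> (\<forall>k. a \<le> k \<longrightarrow> k + p \<le> b \<longrightarrow> x k = x (k + p))"

definition least_period :: "(nat \<Rightarrow> 'a) \<Rightarrow> nat \<Rightarrow> nat \<Rightarrow> nat" where
  "least_period x a b = (LEAST p. 0 < p \<and> periodic_on x a b p)"

lemma periodic_on_mono:
  "periodic_on x a b p \<Longrightarrow> a \<le> a' \<Longrightarrow> b' \<le> b \<Longrightarrow> periodic_on x a' b' p"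
  unfolding periodic_on_def by auto

lemma periodic_on_union:
  assumes "periodic_on x a b p" "periodic_on x a' b' p" "a \<le> a'" "a' + p \<le> b + 1"
  shows "periodic_on x a (max b b') p"
  using assms unfolding periodic_on_def by auto

lemma periodic_on_mult:
  assumes "periodic_on x a b p" "a \<le> j" "j + m * p \<le> b"
  shows "x j = x (j + m * p)"
  using assms(3)
proof (induction m)
  case (Suc m)
  then have "x j = x (j + m * p)" by simp
  also have "\<dots> = x (j + m * p + p)" using Suc.prems assms(1,2) unfolding periodic_on_def by auto
  finally show ?case by (simp add: algebra_simps)
qed simp

lemma periodic_on_mod_eq:
  assumes "periodic_on x a b p" "a \<le> i" "a \<le> j" "i \<le> b" "j \<le> b" "i mod p = j mod p"
  shows "x i = x j"
proof -
  have "x i = x j" if "a \<le> i" "i \<le> j" "j \<le> b" "i mod p = j mod p" for i j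
  proof -
    have "j = i + ((j - i) div p) * p"
      using that(2,4) by (metis mod_eq_dvd_iff_nat dvd_mult_div_cancel le_add_diff_inverse mult.commute)
    then show ?thesis using periodic_on_mult[OF assms(1) that(1), of "(j - i) div p"] that(3) by simp
  qed
  then show ?thesis using assms by (metis nat_le_linear)
qed

lemma exists_mod_eq_between:
  assumes "0 < (p::nat)"
  shows "\<exists>k'. c \<le> k' \<and> k' < c + p \<and> k' mod p = k mod p"
proof -
  define k' where "k' = c + (k + p * c - c) mod p"
  have "c \<le> p * c" using assms by simp
  then have "c + (k + p * c - c) = k + p * c" by linarith
  then have "k' mod p = (k + p * c) mod p" unfolding k'_def by (metis mod_add_right_eq)
  then have "k' mod p = k mod p" by simp
  moreover have "c \<le> k'" "k' < c + p" using assms unfolding k'_def by auto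
  ultimately show ?thesis by blast
qed

text \<open>Every residue modulo \<open>p\<close> occurs in \<open>[c, d]\<close>, so the local period \<open>g\<close> is
  transported to all of \<open>[a, b]\<close> through the period \<open>p\<close>.\<close>

lemma periodic_on_extend:
  assumes "periodic_on x a b p" "periodic_on x c d g" "a \<le> c" "d \<le> b" "c + p \<le> d + 1"
    "g dvd p" "0 < p"
  shows "periodic_on x a b g"
  unfolding periodic_on_def
proof (intro allI impI)
  fix k assume k: "a \<le> k" "k + g \<le> b"
  obtain k1 where k1: "c \<le> k1" "k1 < c + p" "k1 mod p = k mod p"
    using exists_mod_eq_between[OF assms(7)] by blast
  obtain k2 where k2: "c \<le> k2" "k2 < c + p" "k2 mod p = (k + g) mod p"
    using exists_mod_eq_between[OF assms(7)] by blast
  have "x k = x k1" using periodic_on_mod_eq[OF assms(1), of k k1] k k1 assms(3-5) by simp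
  moreover have "x (k + g) = x k2"
    using periodic_on_mod_eq[OF assms(1), of "k + g" k2] k k2 assms(3-5) by simp
  moreover have "k1 mod g = k2 mod g"
    using k1(3) k2(3) assms(6) by (metis mod_add_self2 mod_mod_cancel)
  then have "x k1 = x k2" using periodic_on_mod_eq[OF assms(2), of k1 k2] k1 k2 assms(5) by simp
  ultimately show "x k = x (k + g)" by simp
qed

lemma periodic_on_diff:
  assumes "periodic_on x a b p" "periodic_on x a b q" "p < q"
  shows "periodic_on x a (b - p) (q - p)"
  unfolding periodic_on_def
proof (intro allI impI)
  fix k assume k: "a \<le> k" "k + (q - p) \<le> b - p"
  then have "k + q \<le> b" using assms(3) by linarith
  then have "x k = x (k + q)" "x (k + (q - p)) = x (k + (q - p) + p)"
    using assms k unfolding periodic_on_def by auto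
  then show "x k = x (k + (q - p))" using assms(3) by simp
qed

theorem fine_wilf:
  assumes "periodic_on x a b p" "periodic_on x a b q" "0 < p" "0 < q"
    "a + p + q \<le> b + 1 + gcd p q"
  shows "periodic_on x a b (gcd p q)"
  using assms
proof (induction "p + q" arbitrary: p q b rule: less_induct)
  case less
  have reduce: "periodic_on x a b' (gcd p' q')"
    if "p' < q'" "p' + q' = p + q" "periodic_on x a b' p'" "periodic_on x a b' q'" "0 < p'"
      "a + p' + q' \<le> b' + 1 + gcd p' q'" for p' q' b'
  proof -
    define g where "g = gcd p' q'"
    have g: "gcd p' (q' - p') = g"
      unfolding g_def using that(1) by (metis gcd.commute gcd_diff1_nat less_imp_le_nat)
    have "g \<le> q' - p'" using gcd_le2_nat[of "q' - p'" p'] that(1) g by simp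
    then have "a + p' + (q' - p') \<le> (b' - p') + 1 + gcd p' (q' - p')"
      using that(1,6) g unfolding g_def by linarith
    then have "periodic_on x a (b' - p') g"
      using less.hyps[of p' "q' - p'" "b' - p'"] periodic_on_diff[OF that(3,4,1)]
        periodic_on_mono[OF that(3), of a "b' - p'"] that(1,2,5) g by simp
    moreover have "a + p' \<le> b' - p' + 1" using that(1,6) \<open>g \<le> q' - p'\<close> g_def by linarith
    ultimately show ?thesis
      using periodic_on_extend[OF that(3)] that(5) unfolding g_def by auto
  qed
  consider "p = q" | "p < q" | "q < p" by linarith
  then show ?case
  proof cases
    case 3
    then show ?thesis
      using reduce[of q p b] less.prems by (simp add: gcd.commute add.commute)
  qed (use less.prems reduce in auto)
qed

lemma least_period:
  assumes "0 < p" "periodic_on x a b p"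
  shows "0 < least_period x a b" "periodic_on x a b (least_period x a b)"
    "least_period x a b \<le> p"
  using LeastI[of "\<lambda>p. 0 < p \<and> periodic_on x a b p", OF conjI[OF assms]]
    Least_le[of "\<lambda>p. 0 < p \<and> periodic_on x a b p", OF conjI[OF assms]]
  unfolding least_period_def by auto

lemma least_period_eq_if_overlap:
  assumes "periodic_on x a b p" "periodic_on x a' b' p'" "0 < p" "0 < p'"
    "max a a' + p + p' \<le> min b b' + 2"
  shows "least_period x a b = least_period x a' b'"
proof -
  define \<pi> \<pi>' where "\<pi> = least_period x a b" and "\<pi>' = least_period x a' b'"
  define g where "g = gcd \<pi> \<pi>'"
  note \<pi> = least_period[OF assms(3,1), folded \<pi>_def]
  note \<pi>' = least_period[OF assms(4,2), folded \<pi>'_def]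
  have "0 < g" "g dvd \<pi>" "g dvd \<pi>'" using \<pi>(1) unfolding g_def by auto
  have overlap: "max a a' + \<pi> + \<pi>' \<le> min b b' + 2" using assms(5) \<pi>(3) \<pi>'(3) by linarith
  have "periodic_on x (max a a') (min b b') g"
    unfolding g_def
  proof (rule fine_wilf)
    show "periodic_on x (max a a') (min b b') \<pi>" "periodic_on x (max a a') (min b b') \<pi>'"
      using periodic_on_mono[OF \<pi>(2)] periodic_on_mono[OF \<pi>'(2)] by auto
    show "max a a' + \<pi> + \<pi>' \<le> min b b' + 1 + gcd \<pi> \<pi>'"
      using overlap \<open>0 < g\<close> unfolding g_def by linarith
  qed (use \<pi>(1) \<pi>'(1) in auto)
  then have "periodic_on x a b g" "periodic_on x a' b' g"
    using periodic_on_extend[OF \<pi>(2)] periodic_on_extend[OF \<pi>'(2)] overlap \<pi>(1) \<pi>'(1)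
      \<open>g dvd \<pi>\<close> \<open>g dvd \<pi>'\<close> by auto
  then have "\<pi> \<le> g" "\<pi>' \<le> g"
    using least_period(3)[OF \<open>0 < g\<close>] unfolding \<pi>_def \<pi>'_def by auto
  moreover have "g \<le> \<pi>" "g \<le> \<pi>'" using \<pi>(1) \<pi>'(1) \<open>g dvd \<pi>\<close> \<open>g dvd \<pi>'\<close> by (auto intro: dvd_imp_le)
  ultimately show ?thesis unfolding \<pi>_def \<pi>'_def by simp
qed

lemma eventually_periodic_if_periodic_windows:
  assumes "0 < \<pi>" "1 \<le> A N"
    and periodic: "\<And>n. N \<le> n \<Longrightarrow> periodic_on x (A n) (E n) \<pi>"
    and overlap: "\<And>n. N \<le> n \<Longrightarrow> A (Suc n) + \<pi> \<le> E n + 1"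
    and unbounded: "\<And>n. N \<le> n \<Longrightarrow> n \<le> E n"
  shows "eventually_periodic x"
proof -
  have tail: "periodic_on x (A N) (E n) \<pi>" if "N \<le> n" for n
    using that
  proof (induction n rule: dec_induct)
    case (step n)
    show ?case
    proof (cases "A N \<le> A (Suc n)")
      case True
      then show ?thesis
        using periodic_on_union[OF step.IH periodic[of "Suc n"]] overlap[OF step.hyps(1)] step.hyps
        by (auto elim: periodic_on_mono)
    qed (use periodic[of "Suc n"] step.hyps in \<open>auto elim: periodic_on_mono\<close>)
  qed (use periodic in simp)
  have "x (k + \<pi>) = x k" if "A N \<le> k" for k
    using tail[of "k + \<pi> + N"] unbounded[of "k + \<pi> + N"] that unfolding periodic_on_def by auto
  then show ?thesis unfolding eventually_periodic_def using assms(1,2) by blast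
qed

lemma exists_repeated_factor:
  fixes x :: "nat \<Rightarrow> 'a::finite"
  shows "\<exists>i j. 1 \<le> i \<and> i < j \<and> (\<forall>k<n. x (i + k) = x (j + k))"
proof -
  define f where "f j = map (\<lambda>k. x (j + k)) [0..<n]" for j
  have "f ` {1..} \<subseteq> {xs. set xs \<subseteq> UNIV \<and> length xs = n}" unfolding f_def by auto
  then have "finite (f ` {1..})"
    by (rule finite_subset[OF _ finite_lists_length_eq[OF finite_UNIV]])
  then have "\<not> inj_on f {1..}" using finite_imageD infinite_Ici by blast
  then obtain j1 j2 where "1 \<le> j1" "1 \<le> j2" "j1 \<noteq> j2" "f j1 = f j2"
    unfolding inj_on_def by auto
  then obtain i j where "1 \<le> i" "i < j" "f i = f j" by (metis linorder_neqE_nat)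
  moreover have "x (i + k) = x (j + k)" if "f i = f j" "k < n" for k
    using that arg_cong[OF that(1), of "\<lambda>xs. xs ! k"] unfolding f_def by simp
  ultimately show ?thesis by blast
qed

lemma r_witness:
  fixes x :: "nat \<Rightarrow> 'a::finite"
  shows "\<exists>i. 1 \<le> i \<and> i + n \<le> r n x \<and> (\<forall>k<n. x (i + k) = x (r n x + 1 - n + k))"
proof -
  obtain i j where ij: "1 \<le> i" "i < j" "\<forall>k<n. x (i + k) = x (j + k)"
    using exists_repeated_factor by blast
  then have "\<exists>m. m \<ge> 1 \<and> (\<exists>i. 1 \<le> i \<and> i + n \<le> m \<and> (\<forall>k<n. x (i + k) = x (m + 1 - n + k)))"
    by (intro exI[of _ "j + n - 1"] conjI exI[of _ i]) auto
  from LeastI_ex[OF this] show ?thesis unfolding r_def by blast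
qed

lemma r_le:
  assumes "1 \<le> m" "1 \<le> i" "i + n \<le> m" "\<forall>k<n. x (i + k) = x (m + 1 - n + k)"
  shows "r n x \<le> m"
  unfolding r_def using assms by (blast intro: Least_le)

lemma periodic_window_if_r_le_double:
  fixes x :: "nat \<Rightarrow> 'a::finite"
  assumes "r n x \<le> 2 * n"
  shows "\<exists>a p. 1 \<le> a \<and> a + p \<le> n + 1 \<and> 0 < p \<and> periodic_on x a (a + n + p - 1) p"
proof -
  obtain i where i: "1 \<le> i" "i + n \<le> r n x" "\<forall>k<n. x (i + k) = x (r n x + 1 - n + k)"
    using r_witness by blast
  define p where "p = r n x + 1 - n - i"
  have "periodic_on x i (i + n + p - 1) p"
    unfolding periodic_on_def
  proof (intro allI impI)
    fix k assume k: "i \<le> k" "k + p \<le> i + n + p - 1"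
    then have "k - i < n" using i(1) by linarith
    then have "x (i + (k - i)) = x (r n x + 1 - n + (k - i))" using i(3) by blast
    moreover have "r n x + 1 - n + (k - i) = k + p" using k i unfolding p_def by linarith
    ultimately show "x k = x (k + p)" using k by simp
  qed
  moreover have "i + p \<le> n + 1" "0 < p" using i assms unfolding p_def by linarith+
  ultimately show ?thesis using i(1) by blast
qed

lemma eventually_periodic_if_r_le_double:
  fixes x :: "nat \<Rightarrow> 'a::finite"
  assumes "\<forall>n\<ge>N. r n x \<le> 2 * n"
  shows "eventually_periodic x"
proof -
  obtain A P where AP: "\<And>n. N \<le> n \<Longrightarrow> 1 \<le> A n \<and> A n + P n \<le> n + 1 \<and> 0 < P n \<and>
      periodic_on x (A n) (A n + n + P n - 1) (P n)"
    using periodic_window_if_r_le_double[of _ x] assms by metis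
  define E where "E n = A n + n + P n - 1" for n
  define \<pi> where "\<pi> n = least_period x (A n) (E n)" for n
  have \<pi>_step: "\<pi> (Suc n) = \<pi> n" if "N \<le> n" for n
    using least_period_eq_if_overlap[of x "A n" "E n" "P n" "A (Suc n)" "E (Suc n)" "P (Suc n)"]
      AP[of n] AP[of "Suc n"] that unfolding \<pi>_def E_def by (auto simp: max_def min_def)
  have \<pi>_const: "\<pi> n = \<pi> N" if "N \<le> n" for n
    using that by (induction n rule: dec_induct) (auto simp: \<pi>_step)
  show ?thesis
  proof (rule eventually_periodic_if_periodic_windows)
    fix n assume n: "N \<le> n"
    note window = least_period[of "P n" x "A n" "E n", folded \<pi>_def, unfolded \<pi>_const[OF n]]
    show "periodic_on x (A n) (E n) (\<pi> N)" using window AP[OF n] unfolding E_def by auto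
    show "A (Suc n) + \<pi> N \<le> E n + 1" "n \<le> E n"
      using window AP[OF n] AP[of "Suc n"] n unfolding E_def by auto
  qed (use least_period[of "P N" x "A N" "E N"] AP[of N] in \<open>auto simp: \<pi>_def E_def\<close>)
qed

lemma r_bounded_if_eventually_periodic:
  assumes "eventually_periodic x"
  shows "\<exists>M::int. \<forall>n\<ge>1. int (r n x) - int n \<le> M"
proof -
  obtain p N where p: "0 < p" "1 \<le> N" "\<forall>k\<ge>N. x (k + p) = x k"
    using assms unfolding eventually_periodic_def by blast
  have bound: "r n x \<le> N + p + n - 1" for n
  proof (rule r_le)
    have "N + p + n - 1 + 1 - n + k = (N + k) + p" for k using p(1) by simp
    then show "\<forall>k<n. x (N + k) = x (N + p + n - 1 + 1 - n + k)" using p(3) by (metis le_add1)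
  qed (use p in auto)
  have "int (r n x) - int n \<le> int (N + p)" for n using bound[of n] by linarith
  then show ?thesis by blast
qed

lemma r_le_double_if_r_bounded:
  assumes "\<forall>n\<ge>1. int (r n x) - int n \<le> M"
  shows "\<exists>N. \<forall>n\<ge>N. r n x \<le> 2 * n"
proof (intro exI[of _ "nat M + 1"] allI impI)
  fix n assume n: "nat M + 1 \<le> n"
  then have "int (r n x) - int n \<le> M" using assms by auto
  then show "r n x \<le> 2 * n" using n by linarith
qed

theorem theorem2p3:
  fixes x :: "nat \<Rightarrow> 'a::finite"
  shows "(eventually_periodic x \<longleftrightarrow> (\<exists>N. \<forall>n\<ge>N. r n x \<le> 2 * n))
       \<and> ((\<exists>N. \<forall>n\<ge>N. r n x \<le> 2 * n) \<longleftrightarrow> (\<exists>M::int. \<forall>n\<ge>1. int (r n x) - int n \<le> M))"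
  using eventually_periodic_if_r_le_double[of _ x] r_bounded_if_eventually_periodic[of x]
    r_le_double_if_r_bounded[of x] by blast

end
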